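(* Let $m,n\ge1$, $\delta\in\mathbb Z$ with $\delta\ne m$, $N=m+n$, and let $\omega_k=\omega_k(M^{\mathfrak p}(\underline\delta))$. Then $\omega_0=m+n$, $\omega_1=-\delta m+\frac{(m+n)^2}{2}$, and for $k\ge2$ $$\omega_k=(\beta_1+\beta_2)\omega_{k-1}-\beta_1\beta_2\omega_{k-2},\qquad \beta_1=-\delta+\tfrac{m+n}2,\ \beta_2=\tfrac{n-m}2.$$ Equivalently, $\sum_{k\ge0}\omega_ku^{-k}=\dfrac{\omega_0+(\omega_1-(\beta_1+\beta_2)\omega_0)u^{-1}}{1-(\beta_1+\beta_2)u^{-1}+\beta_1\beta_2u^{-2}}$.
   Context: $\mathfrak{gl}_N$ with matrix units $E_{ij}$, $\epsilon_i$ dual to $E_{ii}$, Borel of upper triangular matrices; $\mathfrak p$ the standard parabolic with Levi $\mathfrak{gl}_m\oplus\mathfrak{gl}_n$; $M^{\mathfrak p}(\lambda)=U(\mathfrak{gl}_N)\otimes_{U(\mathfrak p)}E(\lambda)$ the parabolic Verma module; $\underline\delta=-\delta(\epsilon_1+\cdots+\epsilon_m)$. $V=\mathbb C^N$ with basis $v_i$, $E_{ij}v_k=\delta_{jk}v_i$; $V^*$ with dual basis $v_i^*$, $E_{ij}v_k^*=-\delta_{ik}v_j^*$. $\Omega=\sum_{i,j}E_{ij}\otimes E_{ji}$; on $M\otimes V\otimes V^*$ (factors numbered $0,1,2$) $y_1=\Omega_{01}+\frac N2$, with $\Omega_{01}$ the action of $\Omega$ on factors $0,1$. For a highest weight module $M$,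 $\omega_k(M)$ is the scalar by which $M\to M\otimes V\otimes V^*\xrightarrow{y_1^k}M\otimes V\otimes V^*\to M$ acts, the first map $m\mapsto\sum_j m\otimes v_j\otimes v_j^*$, the last $m\otimes v_i\otimes v_j^*\mapsto\delta_{ij}m$. *)

theory Defs
  imports Complex_Main
begin

text \<open>A representation of gl_N on a complex vector space 'v (scalar multiplication sc):
  E i j is the action of the matrix unit E_ij, for 1 \<le> i,j \<le> N.\<close>
definition gl_rep :: "(complex \<Rightarrow> 'v::ab_group_add \<Rightarrow> 'v) \<Rightarrow> nat \<Rightarrow> (nat \<Rightarrow> nat \<Rightarrow> 'v \<Rightarrow> 'v) \<Rightarrow> bool" where
  "gl_rep sc N E \<longleftrightarrow> vector_space sc \<and>
     (\<forall>i\<in>{1..N}. \<forall>j\<in>{1..N}. Vector_Spaces.linear sc sc (E i j)) \<and>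
     (\<forall>i\<in>{1..N}. \<forall>j\<in>{1..N}. \<forall>k\<in>{1..N}. \<forall>l\<in>{1..N}. \<forall>x.
        E i j (E k l x) - E k l (E i j x)
          = (if j = k then E i l x else 0) - (if l = i then E k j x else 0))"

inductive_set orbit :: "nat \<Rightarrow> (nat \<Rightarrow> nat \<Rightarrow> 'v \<Rightarrow> 'v) \<Rightarrow> 'v \<Rightarrow> 'v set"
  for N E v where
  base: "v \<in> orbit N E v"
| step: "x \<in> orbit N E v \<Longrightarrow> i \<in> {1..N} \<Longrightarrow> j \<in> {1..N} \<Longrightarrow> E i j x \<in> orbit N E v"

definition generated_by :: "(complex \<Rightarrow> 'v::ab_group_add \<Rightarrow> 'v) \<Rightarrow> nat \<Rightarrow> (nat \<Rightarrow> nat \<Rightarrow> 'v \<Rightarrow> 'v) \<Rightarrow> 'v \<Rightarrow> bool" where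
  "generated_by sc N E v \<longleftrightarrow> module.span sc (orbit N E v) = UNIV"

text \<open>Standard parabolic p (Levi gl_m + gl_n, N = m+n): E_ij \<in> p iff not (i > m and j \<le> m).
  v spans a copy of the one-dimensional p-module E(lam) (lam constant on the two blocks):
  E_ii v = lam i v, E_ij v = 0 for i \<noteq> j with E_ij \<in> p.\<close>
definition parabolic_hw_vector :: "(complex \<Rightarrow> 'v::ab_group_add \<Rightarrow> 'v) \<Rightarrow> nat \<Rightarrow> nat \<Rightarrow> (nat \<Rightarrow> nat \<Rightarrow> 'v \<Rightarrow> 'v) \<Rightarrow> (nat \<Rightarrow> complex) \<Rightarrow> 'v \<Rightarrow> bool" where
  "parabolic_hw_vector sc m n E lam v \<longleftrightarrow>
     (\<forall>i\<in>{1..m+n}. E i i v = sc (lam i) v) \<and>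
     (\<forall>i\<in>{1..m+n}. \<forall>j\<in>{1..m+n}. i \<noteq> j \<and> \<not> (m < i \<and> j \<le> m) \<longrightarrow> E i j v = 0)"

text \<open>Elements of M \<otimes> V \<otimes> V* are represented by their components:
  t i j \<in> M is the coefficient of v_i \<otimes> v_j^*.\<close>
definition tensor_emb :: "nat \<Rightarrow> 'v::zero \<Rightarrow> nat \<Rightarrow> nat \<Rightarrow> 'v" where
  "tensor_emb N x = (\<lambda>i j. if i = j \<and> i \<in> {1..N} then x else 0)"

definition tensor_contr :: "nat \<Rightarrow> (nat \<Rightarrow> nat \<Rightarrow> 'v::comm_monoid_add) \<Rightarrow> 'v" where
  "tensor_contr N t = (\<Sum>i=1..N. t i i)"

text \<open>y_1 = Omega_01 + N/2; Omega_01 (x \<otimes> v_i \<otimes> v_j^*) = sum_b E_ib x \<otimes> v_b \<otimes> v_j^*.\<close>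
definition y1 :: "(complex \<Rightarrow> 'v::ab_group_add \<Rightarrow> 'v) \<Rightarrow> nat \<Rightarrow> (nat \<Rightarrow> nat \<Rightarrow> 'v \<Rightarrow> 'v)
                   \<Rightarrow> (nat \<Rightarrow> nat \<Rightarrow> 'v) \<Rightarrow> (nat \<Rightarrow> nat \<Rightarrow> 'v)" where
  "y1 sc N E t = (\<lambda>b j. (\<Sum>i=1..N. E i b (t i j)) + sc (of_nat N / 2) (t b j))"

text \<open>omega_k(M): the scalar by which M \<rightarrow> M\<otimes>V\<otimes>V* \<rightarrow> (y_1^k) \<rightarrow> M\<otimes>V\<otimes>V* \<rightarrow> M acts.\<close>
definition omega :: "(complex \<Rightarrow> 'v::ab_group_add \<Rightarrow> 'v) \<Rightarrow> nat \<Rightarrow> (nat \<Rightarrow> nat \<Rightarrow> 'v \<Rightarrow> 'v) \<Rightarrow> nat \<Rightarrow> complex" where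
  "omega sc N E k = (THE c. \<forall>x. tensor_contr N ((y1 sc N E ^^ k) (tensor_emb N x)) = sc c x)"

end

theory Submission
  imports Defs
begin

text \<open>Let \<open>\<Omega>\<close> be the action of \<open>\<Sum> E\<^sub>i\<^sub>j \<otimes> E\<^sub>j\<^sub>i\<close> on \<open>M \<otimes> V\<close>, where \<open>M\<close> is generated by a vector \<open>v\<close>
  on which the parabolic acts through the weight \<open>a\<close> on the first block and \<open>b\<close> on the second.
  Since \<open>\<Omega>\<close> commutes with \<open>gl\<^sub>N\<close> and \<open>v \<otimes> V\<close> generates \<open>M \<otimes> V\<close>, the relation
  \<open>(\<Omega> - a)(\<Omega> - (b - m)) = 0\<close> on all of \<open>M \<otimes> V\<close> reduces to a direct computation on the vectors \<open>v \<otimes> v\<^sub>j\<close>.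
  On \<open>M \<otimes> V \<otimes> V\<^sup>*\<close> the operator \<open>y\<^sub>1\<close> is \<open>\<Omega> + N/2\<close> on the first two factors, so it satisfies the
  quadratic relation with roots \<open>\<beta>\<^sub>1 = a + N/2\<close>, \<open>\<beta>\<^sub>2 = b - m + N/2\<close>, which contracts to the recurrence.
  Finally \<open>\<omega>\<^sub>0 = N\<close>, and \<open>\<omega>\<^sub>1 = ma + nb + N\<^sup>2/2\<close> because the identity matrix acts on \<open>M\<close> by \<open>ma + nb\<close>.\<close>

locale gl_module =
  fixes sc :: "complex \<Rightarrow> 'v::ab_group_add \<Rightarrow> 'v" and N :: nat and E :: "nat \<Rightarrow> nat \<Rightarrow> 'v \<Rightarrow> 'v"
  assumes gl_rep: "gl_rep sc N E"
begin

sublocale vector_space sc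
  using gl_rep unfolding gl_rep_def by blast

lemma E_commutator:
  "\<lbrakk>i \<in> {1..N}; j \<in> {1..N}; k \<in> {1..N}; l \<in> {1..N}\<rbrakk> \<Longrightarrow>
   E i j (E k l x) - E k l (E i j x) = (if j = k then E i l x else 0) - (if l = i then E k j x else 0)"
  using gl_rep unfolding gl_rep_def by blast

lemma E_linear: "i \<in> {1..N} \<Longrightarrow> j \<in> {1..N} \<Longrightarrow> Vector_Spaces.linear sc sc (E i j)"
  using gl_rep unfolding gl_rep_def by blast

lemma E_module_hom: "i \<in> {1..N} \<Longrightarrow> j \<in> {1..N} \<Longrightarrow> module_hom sc sc (E i j)"
  by (simp add: E_linear module_hom_iff_linear)

lemma E_add: "i \<in> {1..N} \<Longrightarrow> j \<in> {1..N} \<Longrightarrow> E i j (x + y) = E i j x + E i j y"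
  using E_module_hom module_hom.add by blast

lemma E_scale: "i \<in> {1..N} \<Longrightarrow> j \<in> {1..N} \<Longrightarrow> E i j (sc c x) = sc c (E i j x)"
  using E_module_hom module_hom.scale by blast

lemma E_zero: "i \<in> {1..N} \<Longrightarrow> j \<in> {1..N} \<Longrightarrow> E i j 0 = 0"
  using E_module_hom module_hom.zero by blast

lemma E_diff: "i \<in> {1..N} \<Longrightarrow> j \<in> {1..N} \<Longrightarrow> E i j (x - y) = E i j x - E i j y"
  using E_module_hom module_hom.diff by blast

lemma E_sum: "i \<in> {1..N} \<Longrightarrow> j \<in> {1..N} \<Longrightarrow> E i j (sum g A) = (\<Sum>a\<in>A. E i j (g a))"
  using E_module_hom module_hom.sum by blast

lemma generated_by_induct:
  assumes "generated_by sc N E v" and "subspace S" and "v \<in> S"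
    and step: "\<And>x i j. x \<in> S \<Longrightarrow> i \<in> {1..N} \<Longrightarrow> j \<in> {1..N} \<Longrightarrow> E i j x \<in> S"
  shows "x \<in> S"
proof -
  have "orbit N E v \<subseteq> S"
  proof
    fix y assume "y \<in> orbit N E v"
    then show "y \<in> S" by induction (use \<open>v \<in> S\<close> step in auto)
  qed
  then have "span (orbit N E v) \<subseteq> S" using \<open>subspace S\<close> by (rule span_minimal)
  then show ?thesis using \<open>generated_by sc N E v\<close> unfolding generated_by_def by auto
qed

lemma commuting_endomorphism_scalar:
  assumes gen: "generated_by sc N E v" and f: "Vector_Spaces.linear sc sc f"
    and comm: "\<And>x i j. i \<in> {1..N} \<Longrightarrow> j \<in> {1..N} \<Longrightarrow> f (E i j x) = E i j (f x)"
    and "f v = sc c v"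
  shows "f x = sc c x"
proof -
  interpret f: module_hom sc sc f using f by (simp add: module_hom_iff_linear)
  have "subspace {x. f x = sc c x}"
    by (rule subspaceI) (auto simp: f.add f.scale scale_right_distrib scale_left_commute)
  then show ?thesis
    by (rule generated_by_induct[OF gen, where S = "{x. f x = sc c x}", simplified])
       (use \<open>f v = sc c v\<close> in \<open>auto simp: comm E_scale\<close>)
qed

text \<open>An element of \<open>M \<otimes> V\<close> is given by its components: \<open>u i \<in> M\<close> is the coefficient of \<open>v\<^sub>i\<close>.
  Then \<open>\<Omega>\<^sub>0\<^sub>1 (x \<otimes> v\<^sub>i) = \<Sum>\<^sub>b E\<^sub>i\<^sub>b x \<otimes> v\<^sub>b\<close> and \<open>E\<^sub>a\<^sub>b (x \<otimes> v\<^sub>i) = E\<^sub>a\<^sub>b x \<otimes> v\<^sub>i + \<delta>\<^sub>b\<^sub>i x \<otimes> v\<^sub>a\<close>.\<close>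

definition Omega :: "(nat \<Rightarrow> 'v) \<Rightarrow> nat \<Rightarrow> 'v" where
  "Omega u b = (\<Sum>i\<in>{1..N}. E i b (u i))"

definition tensor_action :: "nat \<Rightarrow> nat \<Rightarrow> (nat \<Rightarrow> 'v) \<Rightarrow> nat \<Rightarrow> 'v" where
  "tensor_action a b u i = E a b (u i) + (if i = a then u b else 0)"

definition tensor_single :: "'v \<Rightarrow> nat \<Rightarrow> nat \<Rightarrow> 'v" where
  "tensor_single x j i = (if i = j then x else 0)"

definition Omega_quad :: "complex \<Rightarrow> complex \<Rightarrow> (nat \<Rightarrow> 'v) \<Rightarrow> nat \<Rightarrow> 'v" where
  "Omega_quad r1 r2 u c = Omega (Omega u) c - sc (r1 + r2) (Omega u c) + sc (r1 * r2) (u c)"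

lemma Omega_cong: "(\<And>i. i \<in> {1..N} \<Longrightarrow> u i = w i) \<Longrightarrow> Omega u b = Omega w b"
  unfolding Omega_def by (rule sum.cong) auto

lemma Omega_add: "b \<in> {1..N} \<Longrightarrow> Omega (\<lambda>i. u i + w i) b = Omega u b + Omega w b"
  unfolding Omega_def by (simp add: E_add sum.distrib)

lemma Omega_diff: "b \<in> {1..N} \<Longrightarrow> Omega (\<lambda>i. u i - w i) b = Omega u b - Omega w b"
  unfolding Omega_def by (simp add: E_diff sum_subtractf)

lemma Omega_scale: "b \<in> {1..N} \<Longrightarrow> Omega (\<lambda>i. sc k (u i)) b = sc k (Omega u b)"
  unfolding Omega_def by (simp add: E_scale scale_sum_right)

lemma Omega_zero: "b \<in> {1..N} \<Longrightarrow> Omega (\<lambda>i. 0) b = 0"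
  unfolding Omega_def by (simp add: E_zero)

lemma Omega_tensor_single: "j \<in> {1..N} \<Longrightarrow> b \<in> {1..N} \<Longrightarrow> Omega (tensor_single x j) b = E j b x"
  unfolding Omega_def tensor_single_def by (simp add: E_zero if_distrib sum.delta cong: if_cong)

lemma Omega_tensor_action:
  assumes a: "a \<in> {1..N}" and b: "b \<in> {1..N}" and c: "c \<in> {1..N}"
  shows "Omega (tensor_action a b u) c = tensor_action a b (Omega u) c"
proof -
  have "Omega (tensor_action a b u) c = (\<Sum>i\<in>{1..N}. E i c (E a b (u i)) + (if i = a then E a c (u b) else 0))"
    unfolding Omega_def tensor_action_def using c by (intro sum.cong) (auto simp: E_add E_zero)
  also have "\<dots> = (\<Sum>i\<in>{1..N}. E i c (E a b (u i))) + E a c (u b)"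
    using a by (simp add: sum.distrib)
  also have "(\<Sum>i\<in>{1..N}. E i c (E a b (u i)))
      = (\<Sum>i\<in>{1..N}. E a b (E i c (u i)) + ((if c = a then E i b (u i) else 0) - (if b = i then E a c (u i) else 0)))"
    using a b c by (intro sum.cong) (auto simp: E_commutator[symmetric])
  also have "\<dots> = (\<Sum>i\<in>{1..N}. E a b (E i c (u i))) + (if c = a then (\<Sum>i\<in>{1..N}. E i b (u i)) else 0) - E a c (u b)"
    using b by (simp add: sum.distrib sum_subtractf sum.delta)
  finally show ?thesis
    unfolding tensor_action_def Omega_def using a b by (simp add: E_sum)
qed

lemma Omega_quad_cong:
  assumes "c \<in> {1..N}" and "\<And>i. i \<in> {1..N} \<Longrightarrow> u i = w i"
  shows "Omega_quad r1 r2 u c = Omega_quad r1 r2 w c"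
proof -
  have "Omega u = Omega w" using Omega_cong[of u w] assms(2) by blast
  then show ?thesis unfolding Omega_quad_def using assms by simp
qed

lemma Omega_quad_add:
  assumes c: "c \<in> {1..N}" shows "Omega_quad r1 r2 (\<lambda>i. u i + w i) c = Omega_quad r1 r2 u c + Omega_quad r1 r2 w c"
proof -
  have "Omega (Omega (\<lambda>i. u i + w i)) c = Omega (\<lambda>i. Omega u i + Omega w i) c"
    by (rule Omega_cong) (simp add: Omega_add)
  then show ?thesis unfolding Omega_quad_def using c by (simp add: Omega_add algebra_simps)
qed

lemma Omega_quad_diff:
  assumes c: "c \<in> {1..N}" shows "Omega_quad r1 r2 (\<lambda>i. u i - w i) c = Omega_quad r1 r2 u c - Omega_quad r1 r2 w c"
proof -
  have "Omega (Omega (\<lambda>i. u i - w i)) c = Omega (\<lambda>i. Omega u i - Omega w i) c"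
    by (rule Omega_cong) (simp add: Omega_diff)
  then show ?thesis unfolding Omega_quad_def using c by (simp add: Omega_diff algebra_simps)
qed

lemma Omega_quad_scale:
  assumes c: "c \<in> {1..N}" shows "Omega_quad r1 r2 (\<lambda>i. sc k (u i)) c = sc k (Omega_quad r1 r2 u c)"
proof -
  have "Omega (Omega (\<lambda>i. sc k (u i))) c = Omega (\<lambda>i. sc k (Omega u i)) c"
    by (rule Omega_cong) (simp add: Omega_scale)
  then show ?thesis
    unfolding Omega_quad_def using c by (simp add: Omega_scale algebra_simps scale_left_commute)
qed

lemma Omega_quad_zero:
  assumes c: "c \<in> {1..N}" shows "Omega_quad r1 r2 (\<lambda>i. 0) c = 0"
proof -
  have "Omega (Omega (\<lambda>i. 0)) c = Omega (\<lambda>i. 0) c"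
    by (rule Omega_cong) (simp add: Omega_zero)
  then show ?thesis unfolding Omega_quad_def using c by (simp add: Omega_zero)
qed

lemma Omega_quad_sum:
  assumes c: "c \<in> {1..N}" and "finite J"
  shows "Omega_quad r1 r2 (\<lambda>i. \<Sum>j\<in>J. f j i) c = (\<Sum>j\<in>J. Omega_quad r1 r2 (f j) c)"
  using \<open>finite J\<close> by induction (simp_all add: Omega_quad_zero[OF c] Omega_quad_add[OF c])

lemma Omega_quad_tensor_action:
  assumes "a \<in> {1..N}" and "b \<in> {1..N}" and "c \<in> {1..N}"
  shows "Omega_quad r1 r2 (tensor_action a b u) c = tensor_action a b (Omega_quad r1 r2 u) c"
proof -
  have "Omega (Omega (tensor_action a b u)) c = Omega (tensor_action a b (Omega u)) c"
    by (rule Omega_cong) (rule Omega_tensor_action[OF assms(1,2)])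
  then show ?thesis unfolding Omega_quad_def
    using assms by (simp add: Omega_tensor_action tensor_action_def E_add E_diff E_scale algebra_simps)
qed

text \<open>\<open>\<Omega>\<close> commutes with \<open>gl\<^sub>N\<close>, so the \<open>x\<close> with \<open>x \<otimes> V\<close> in the kernel of a polynomial in \<open>\<Omega>\<close>
  form a submodule: \<open>E\<^sub>a\<^sub>b x \<otimes> v\<^sub>j = E\<^sub>a\<^sub>b (x \<otimes> v\<^sub>j) - \<delta>\<^sub>b\<^sub>j x \<otimes> v\<^sub>a\<close>.\<close>

lemma Omega_quad_eq_0:
  assumes gen: "generated_by sc N E v"
    and on_v: "\<And>j c. j \<in> {1..N} \<Longrightarrow> c \<in> {1..N} \<Longrightarrow> Omega_quad r1 r2 (tensor_single v j) c = 0"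
    and c: "c \<in> {1..N}"
  shows "Omega_quad r1 r2 u c = 0"
proof -
  define W where "W = {x. \<forall>j\<in>{1..N}. \<forall>c\<in>{1..N}. Omega_quad r1 r2 (tensor_single x j) c = 0}"
  have single_0: "tensor_single 0 j = (\<lambda>i. 0)"
    and single_add: "tensor_single (x + y) j = (\<lambda>i. tensor_single x j i + tensor_single y j i)"
    and single_scale: "tensor_single (sc k x) j = (\<lambda>i. sc k (tensor_single x j i))" for x y k j
    by (auto simp: tensor_single_def)
  have W_subspace: "subspace W"
    unfolding W_def by (rule subspaceI) (simp_all add: single_0 single_add single_scale
        Omega_quad_zero Omega_quad_add Omega_quad_scale)
  have W_closed: "E a b x \<in> W" if x: "x \<in> W" and a: "a \<in> {1..N}" and b: "b \<in> {1..N}" for x a b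
  proof -
    have "Omega_quad r1 r2 (tensor_single (E a b x) j) c = 0" if j: "j \<in> {1..N}" and c: "c \<in> {1..N}" for j c
    proof -
      have "tensor_single (E a b x) j
          = (\<lambda>i. tensor_action a b (tensor_single x j) i - (if b = j then tensor_single x a i else 0))"
        using a b by (auto simp: tensor_single_def tensor_action_def E_zero)
      then have "Omega_quad r1 r2 (tensor_single (E a b x) j) c
          = tensor_action a b (Omega_quad r1 r2 (tensor_single x j)) c
            - Omega_quad r1 r2 (\<lambda>i. if b = j then tensor_single x a i else 0) c"
        using a b c by (simp add: Omega_quad_diff Omega_quad_tensor_action)
      also have "\<dots> = 0"
        using x a b c j unfolding W_def tensor_action_def by (cases "b = j") (simp_all add: E_zero Omega_quad_zero)
      finally show ?thesis .
    qed
    then show ?thesis unfolding W_def by blast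
  qed
  have in_W: "x \<in> W" for x
    by (rule generated_by_induct[OF gen W_subspace _ W_closed]) (auto simp: W_def on_v)
  have "Omega_quad r1 r2 u c = Omega_quad r1 r2 (\<lambda>i. \<Sum>j\<in>{1..N}. tensor_single (u j) j i) c"
    using c by (rule Omega_quad_cong) (simp add: tensor_single_def)
  also have "\<dots> = 0"
    using c in_W by (simp add: Omega_quad_sum W_def)
  finally show ?thesis .
qed

definition identity_action :: "'v \<Rightarrow> 'v" where
  "identity_action x = (\<Sum>b\<in>{1..N}. E b b x)"

lemma identity_action_linear: "Vector_Spaces.linear sc sc identity_action"
proof -
  interpret vector_space_pair sc sc by unfold_locales
  show ?thesis
    unfolding identity_action_def by (rule linear_compose_sum) (simp add: E_linear)
qed

lemma identity_action_commute:
  assumes i: "i \<in> {1..N}" and j: "j \<in> {1..N}"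
  shows "identity_action (E i j x) = E i j (identity_action x)"
proof -
  have "identity_action (E i j x)
      = (\<Sum>b\<in>{1..N}. E i j (E b b x) + ((if b = i then E b j x else 0) - (if j = b then E i b x else 0)))"
    unfolding identity_action_def using i j by (intro sum.cong) (auto simp: E_commutator[symmetric])
  also have "\<dots> = (\<Sum>b\<in>{1..N}. E i j (E b b x))"
    using i j by (simp add: sum.distrib sum_subtractf)
  finally show ?thesis unfolding identity_action_def using i j by (simp add: E_sum)
qed

lemma y1_eq_Omega: "y1 sc N E t b j = Omega (\<lambda>i. t i j) b + sc (of_nat N / 2) (t b j)"
  unfolding y1_def Omega_def by simp

text \<open>\<open>y\<^sub>1\<close> is \<open>\<Omega>\<^sub>0\<^sub>1 + N/2\<close> acting column by column, so a quadratic relation for \<open>\<Omega>\<close> on \<open>M \<otimes> V\<close>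
  with roots \<open>r\<^sub>1, r\<^sub>2\<close> becomes one for \<open>y\<^sub>1\<close> with roots \<open>r\<^sub>i + N/2\<close>.\<close>

lemma y1_y1:
  assumes quad: "\<And>u c. c \<in> {1..N} \<Longrightarrow> Omega_quad r1 r2 u c = 0" and b: "b \<in> {1..N}"
  shows "y1 sc N E (y1 sc N E t) b j
    = sc ((r1 + of_nat N / 2) + (r2 + of_nat N / 2)) (y1 sc N E t b j)
      - sc ((r1 + of_nat N / 2) * (r2 + of_nat N / 2)) (t b j)"
proof -
  define h :: complex where "h = of_nat N / 2"
  let ?col = "\<lambda>i. t i j"
  let ?X = "Omega ?col b" and ?Y = "t b j"
  have "Omega (\<lambda>i. y1 sc N E t i j) b = Omega (\<lambda>i. Omega ?col i + sc h (?col i)) b"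
    by (simp add: y1_eq_Omega h_def)
  also have "\<dots> = Omega (Omega ?col) b + sc h ?X"
    using b by (simp add: Omega_add Omega_scale)
  also have "Omega (Omega ?col) b = sc (r1 + r2) ?X - sc (r1 * r2) ?Y"
    using quad[OF b, of ?col] unfolding Omega_quad_def by (simp add: algebra_simps)
  finally have "y1 sc N E (y1 sc N E t) b j
      = sc (r1 + r2) ?X - sc (r1 * r2) ?Y + sc h ?X + sc h (?X + sc h ?Y)"
    by (simp add: y1_eq_Omega[of "y1 sc N E t"] y1_eq_Omega[of t] h_def)
  also have "\<dots> = sc (r1 + r2 + h + h) ?X + sc (h * h - r1 * r2) ?Y"
    by (simp only: scale_left_distrib scale_left_diff_distrib scale_right_distrib scale_scale)
       (simp add: algebra_simps)
  also have "\<dots> = sc ((r1 + h) + (r2 + h)) ?X + sc (((r1 + h) + (r2 + h)) * h - (r1 + h) * (r2 + h)) ?Y"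
    by (simp add: algebra_simps)
  also have "\<dots> = sc ((r1 + h) + (r2 + h)) (?X + sc h ?Y) - sc ((r1 + h) * (r2 + h)) ?Y"
    by (simp add: scale_right_distrib scale_left_diff_distrib)
  finally show ?thesis by (simp add: y1_eq_Omega h_def)
qed

definition omega_map :: "nat \<Rightarrow> 'v \<Rightarrow> 'v" where
  "omega_map k x = tensor_contr N ((y1 sc N E ^^ k) (tensor_emb N x))"

lemma omega_map_0: "omega_map 0 x = sc (of_nat N) x"
proof -
  have "omega_map 0 x = (\<Sum>b\<in>{1..N}. x)"
    unfolding omega_map_def tensor_contr_def tensor_emb_def by (intro sum.cong) auto
  then show ?thesis by (simp add: sum_constant_scale)
qed

lemma omega_map_1: "omega_map 1 x = identity_action x + sc ((of_nat N)\<^sup>2 / 2) x"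
proof -
  have "y1 sc N E (tensor_emb N x) b b = E b b x + sc (of_nat N / 2) x" if b: "b \<in> {1..N}" for b
    unfolding y1_eq_Omega tensor_emb_def using b
    by (simp add: Omega_def E_zero if_distrib sum.delta cong: if_cong)
  then have "omega_map 1 x = (\<Sum>b\<in>{1..N}. E b b x + sc (of_nat N / 2) x)"
    unfolding omega_map_def tensor_contr_def by simp
  also have "\<dots> = identity_action x + sc (of_nat N * (of_nat N / 2)) x"
    by (simp add: identity_action_def sum.distrib sum_constant_scale)
  finally show ?thesis by (simp add: power2_eq_square)
qed

lemma omega_map_Suc_Suc:
  assumes "\<And>u c. c \<in> {1..N} \<Longrightarrow> Omega_quad r1 r2 u c = 0"
  shows "omega_map (Suc (Suc k)) x
    = sc ((r1 + of_nat N / 2) + (r2 + of_nat N / 2)) (omega_map (Suc k) x)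
      - sc ((r1 + of_nat N / 2) * (r2 + of_nat N / 2)) (omega_map k x)"
proof -
  let ?t = "(y1 sc N E ^^ k) (tensor_emb N x)"
  have "omega_map (Suc (Suc k)) x = (\<Sum>b\<in>{1..N}. y1 sc N E (y1 sc N E ?t) b b)"
    unfolding omega_map_def tensor_contr_def by simp
  also have "\<dots> = (\<Sum>b\<in>{1..N}. sc ((r1 + of_nat N / 2) + (r2 + of_nat N / 2)) (y1 sc N E ?t b b)
                        - sc ((r1 + of_nat N / 2) * (r2 + of_nat N / 2)) (?t b b))"
    by (intro sum.cong refl y1_y1 assms) simp
  finally show ?thesis
    unfolding omega_map_def tensor_contr_def by (simp add: sum_subtractf scale_sum_right)
qed

lemma omega_eqI:
  fixes w :: 'v
  assumes "w \<noteq> 0" and "\<And>x. omega_map k x = sc c x"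
  shows "omega sc N E k = c"
  unfolding omega_def
proof (rule the_equality)
  show "\<forall>x. tensor_contr N ((y1 sc N E ^^ k) (tensor_emb N x)) = sc c x"
    using assms(2) unfolding omega_map_def by blast
next
  fix c' assume "\<forall>x. tensor_contr N ((y1 sc N E ^^ k) (tensor_emb N x)) = sc c' x"
  then have "sc c' w = sc c w" using assms(2) unfolding omega_map_def by metis
  then show "c' = c" using \<open>w \<noteq> 0\<close> by simp
qed

lemma omega_0:
  fixes w :: 'v
  assumes "w \<noteq> 0" shows "omega sc N E 0 = of_nat N"
  using assms omega_map_0 by (rule omega_eqI)

lemma omega_1:
  fixes w :: 'v
  assumes "w \<noteq> 0" and "\<And>x. identity_action x = sc c x"
  shows "omega sc N E 1 = c + (of_nat N)\<^sup>2 / 2"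
  using assms(1) by (rule omega_eqI) (use omega_map_1 assms(2) in \<open>simp add: scale_left_distrib\<close>)

context
  fixes w :: 'v and c r1 r2 :: complex
  assumes nonzero: "w \<noteq> 0"
    and identity_scalar: "\<And>x. identity_action x = sc c x"
    and quad: "\<And>u b. b \<in> {1..N} \<Longrightarrow> Omega_quad r1 r2 u b = 0"
begin

lemma omega_map_scalar: "omega_map k x = sc (omega sc N E k) x"
proof (induction k arbitrary: x rule: induct_nat_012)
  case 0
  then show ?case by (simp add: omega_map_0 omega_0[OF nonzero])
next
  case 1
  then show ?case
    using omega_1[OF nonzero identity_scalar] omega_map_1 by (simp add: identity_scalar scale_left_distrib)
next
  case (ge2 k)
  let ?s = "(r1 + of_nat N / 2) + (r2 + of_nat N / 2)" and ?p = "(r1 + of_nat N / 2) * (r2 + of_nat N / 2)"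
  have map_eq: "omega_map (Suc (Suc k)) x = sc (?s * omega sc N E (Suc k) - ?p * omega sc N E k) x" for x
  proof -
    have "omega_map (Suc (Suc k)) x = sc ?s (omega_map (Suc k) x) - sc ?p (omega_map k x)"
      by (rule omega_map_Suc_Suc[OF quad])
    also have "\<dots> = sc ?s (sc (omega sc N E (Suc k)) x) - sc ?p (sc (omega sc N E k) x)"
      by (simp only: ge2.IH)
    finally show ?thesis by (simp only: scale_scale scale_left_diff_distrib)
  qed
  have "omega sc N E (Suc (Suc k)) = ?s * omega sc N E (Suc k) - ?p * omega sc N E k"
    by (rule omega_eqI[OF nonzero map_eq])
  with map_eq show ?case by simp
qed

lemma omega_Suc_Suc:
  "omega sc N E (Suc (Suc k))
    = ((r1 + of_nat N / 2) + (r2 + of_nat N / 2)) * omega sc N E (Suc k)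
      - (r1 + of_nat N / 2) * (r2 + of_nat N / 2) * omega sc N E k"
proof -
  have "sc (omega sc N E (Suc (Suc k))) w
      = sc (((r1 + of_nat N / 2) + (r2 + of_nat N / 2)) * omega sc N E (Suc k)
            - (r1 + of_nat N / 2) * (r2 + of_nat N / 2) * omega sc N E k) w"
    using omega_map_Suc_Suc[OF quad, of k w] by (simp add: omega_map_scalar scale_left_diff_distrib)
  then show ?thesis using nonzero by simp
qed

end

end

locale parabolic_hw_module = gl_module sc "m + n" E
  for sc :: "complex \<Rightarrow> 'v::ab_group_add \<Rightarrow> 'v" and m n :: nat and E +
  fixes a b :: complex and v :: 'v
  assumes hw: "parabolic_hw_vector sc m n E (\<lambda>i. if i \<le> m then a else b) v"
    and generated: "generated_by sc (m + n) E v"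
begin

lemma E_diag_v: "i \<in> {1..m+n} \<Longrightarrow> E i i v = sc (if i \<le> m then a else b) v"
  using hw unfolding parabolic_hw_vector_def by blast

lemma E_offdiag_v:
  "\<lbrakk>i \<in> {1..m+n}; j \<in> {1..m+n}; i \<noteq> j; \<not> (m < i \<and> j \<le> m)\<rbrakk> \<Longrightarrow> E i j v = 0"
  using hw unfolding parabolic_hw_vector_def by blast

lemma sum_two_blocks: "(\<Sum>i\<in>{1..m+n}. f i) = (\<Sum>i\<in>{1..m}. f i) + (\<Sum>i\<in>{m+1..m+n}. f i)"
  using sum.ub_add_nat[of 1 m f n] by simp

lemma identity_action_eq: "identity_action x = sc (of_nat m * a + of_nat n * b) x"
proof (rule commuting_endomorphism_scalar[OF generated identity_action_linear identity_action_commute])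
  have "identity_action v = (\<Sum>i\<in>{1..m+n}. sc (if i \<le> m then a else b) v)"
    unfolding identity_action_def by (intro sum.cong) (auto simp: E_diag_v)
  also have "\<dots> = sc (\<Sum>i\<in>{1..m+n}. if i \<le> m then a else b) v"
    by (simp add: scale_sum_left)
  also have "(\<Sum>i\<in>{1..m+n}. if i \<le> m then a else b) = of_nat m * a + of_nat n * b"
    by (subst sum_two_blocks) simp
  finally show "identity_action v = sc (of_nat m * a + of_nat n * b) v" .
qed

lemma E_v_first_block: "\<lbrakk>i \<in> {1..m+n}; i \<le> m; c \<in> {1..m+n}\<rbrakk> \<Longrightarrow> E i c v = (if c = i then sc a v else 0)"
  by (auto simp: E_diag_v E_offdiag_v)

lemma E_v_second_block:
  "\<lbrakk>j \<in> {1..m+n}; m < j; i \<in> {1..m+n}; m < i\<rbrakk> \<Longrightarrow> E j i v = (if i = j then sc b v else 0)"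
  by (auto simp: E_diag_v E_offdiag_v)

lemma Omega_quad_single_v_first_block:
  assumes j: "j \<in> {1..m+n}" "j \<le> m" and c: "c \<in> {1..m+n}"
  shows "Omega_quad a (b - of_nat m) (tensor_single v j) c = 0"
proof -
  have Omega_v: "Omega (tensor_single v j) i = tensor_single (sc a v) j i" if "i \<in> {1..m+n}" for i
    using that j by (simp add: Omega_tensor_single E_v_first_block tensor_single_def)
  have "Omega (Omega (tensor_single v j)) c = Omega (tensor_single (sc a v) j) c"
    by (rule Omega_cong) (rule Omega_v)
  also have "\<dots> = sc a (tensor_single (sc a v) j c)"
    using j c by (simp add: Omega_tensor_single E_scale E_v_first_block tensor_single_def)
  finally have Omega_Omega_v: "Omega (Omega (tensor_single v j)) c = sc a (tensor_single (sc a v) j c)" .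
  show ?thesis
  proof (cases "c = j")
    case True
    have "Omega_quad a (b - of_nat m) (tensor_single v j) c
        = sc (a * a) v - sc ((a + (b - of_nat m)) * a) v + sc (a * (b - of_nat m)) v"
      unfolding Omega_quad_def Omega_Omega_v Omega_v[OF c] using True
      by (simp add: tensor_single_def scale_scale)
    also have "\<dots> = sc (a * a - (a + (b - of_nat m)) * a + a * (b - of_nat m)) v"
      by (simp only: scale_left_distrib scale_left_diff_distrib)
    finally show ?thesis by (simp add: algebra_simps)
  next
    case False
    then show ?thesis
      unfolding Omega_quad_def Omega_Omega_v Omega_v[OF c] by (simp add: tensor_single_def)
  qed
qed

lemma Omega_Omega_single_v_second_block:
  assumes j: "j \<in> {1..m+n}" "m < j" and c: "c \<in> {1..m+n}"
  shows "Omega (Omega (tensor_single v j)) c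
    = (if c \<le> m then sc a (E j c v) else 0) + (if c = j then sc (of_nat m * a) v else 0)
      - sc (of_nat m) (E j c v) + sc b (E j c v)"
proof -
  have first: "E i c (E j i v) = (if c = i then sc a (E j c v) else 0) + (if c = j then sc a v else 0) - E j c v"
    if i: "i \<in> {1..m+n}" "i \<le> m" for i
    using E_commutator[of i c j i v] i j c by (auto simp: E_v_first_block E_diag_v E_scale E_zero algebra_simps)
  have second: "E i c (E j i v) = (if i = j then sc b (E j c v) else 0)" if i: "i \<in> {1..m+n}" "m < i" for i
    using i j c by (simp add: E_v_second_block E_scale E_zero)
  have "Omega (Omega (tensor_single v j)) c = (\<Sum>i\<in>{1..m+n}. E i c (E j i v))"
    unfolding Omega_def[of "Omega (tensor_single v j)"] using j c
    by (intro sum.cong refl) (simp add: Omega_tensor_single)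
  also have "\<dots> = (\<Sum>i\<in>{1..m}. (if c = i then sc a (E j c v) else 0) + (if c = j then sc a v else 0) - E j c v)
                  + (\<Sum>i\<in>{m+1..m+n}. if i = j then sc b (E j c v) else 0)"
    unfolding sum_two_blocks using first second by (intro arg_cong2[where f = "(+)"] sum.cong) auto
  also have "\<dots> = (if c \<le> m then sc a (E j c v) else 0) + (if c = j then sc (of_nat m * a) v else 0)
                  - sc (of_nat m) (E j c v) + sc b (E j c v)"
    using j c by (simp add: sum.distrib sum_subtractf sum_constant_scale sum.delta' scale_scale)
  finally show ?thesis .
qed

lemma Omega_quad_single_v_second_block:
  assumes j: "j \<in> {1..m+n}" "m < j" and c: "c \<in> {1..m+n}"
  shows "Omega_quad a (b - of_nat m) (tensor_single v j) c = 0"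
proof -
  have Omega_v: "Omega (tensor_single v j) c = E j c v"
    using j c by (simp add: Omega_tensor_single)
  consider "c \<le> m" | "c = j" | "m < c" "c \<noteq> j" by linarith
  then show ?thesis
  proof cases
    case 1
    then have "Omega_quad a (b - of_nat m) (tensor_single v j) c
        = sc (a - of_nat m + b - (a + (b - of_nat m))) (E j c v)"
      unfolding Omega_quad_def Omega_Omega_single_v_second_block[OF j c] Omega_v using j
      by (simp add: tensor_single_def scale_left_distrib scale_left_diff_distrib)
    then show ?thesis by simp
  next
    case 2
    then have "Omega_quad a (b - of_nat m) (tensor_single v j) c
        = sc (of_nat m * a - of_nat m * b + b * b - (a + (b - of_nat m)) * b + a * (b - of_nat m)) v"
      unfolding Omega_quad_def Omega_Omega_single_v_second_block[OF j c] Omega_v using j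
      by (simp add: tensor_single_def E_diag_v scale_scale scale_left_distrib scale_left_diff_distrib)
    then show ?thesis by (simp add: algebra_simps)
  next
    case 3
    then show ?thesis
      unfolding Omega_quad_def Omega_Omega_single_v_second_block[OF j c] Omega_v using j c
      by (simp add: tensor_single_def E_v_second_block)
  qed
qed

lemma Omega_quad_roots: "c \<in> {1..m+n} \<Longrightarrow> Omega_quad a (b - of_nat m) u c = 0"
  by (rule Omega_quad_eq_0[OF generated])
     (metis Omega_quad_single_v_first_block Omega_quad_single_v_second_block not_less)

end

theorem mainTheorem20:
  fixes sc :: "complex \<Rightarrow> 'v::ab_group_add \<Rightarrow> 'v"
    and E :: "nat \<Rightarrow> nat \<Rightarrow> 'v \<Rightarrow> 'v"
    and v :: 'v and m n :: nat and \<delta> :: int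
  assumes "m \<ge> 1" and "n \<ge> 1" and "\<delta> \<noteq> int m"
    and "gl_rep sc (m + n) E"
    and "v \<noteq> 0"
    and "parabolic_hw_vector sc m n E (\<lambda>i. if i \<le> m then - of_int \<delta> else 0) v"
    and "generated_by sc (m + n) E v"
  shows "omega sc (m + n) E 0 = of_nat (m + n)
       \<and> omega sc (m + n) E 1 = - of_int \<delta> * of_nat m + (of_nat (m + n))\<^sup>2 / 2
       \<and> (\<forall>k\<ge>2. let \<beta>1 = - of_int \<delta> + of_nat (m + n) / 2;
                    \<beta>2 = (of_nat n - of_nat m) / 2
                in omega sc (m + n) E k
                   = (\<beta>1 + \<beta>2) * omega sc (m + n) E (k - 1)
                     - \<beta>1 * \<beta>2 * omega sc (m + n) E (k - 2))"
proof -
  interpret parabolic_hw_module sc m n E "- of_int \<delta>" 0 v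
    using assms(4,6,7) by unfold_locales auto
  have identity_scalar: "identity_action x = sc (- of_int \<delta> * of_nat m) x" for x
    using identity_action_eq by simp
  have roots: "0 - of_nat m + of_nat (m + n) / 2 = (of_nat n - of_nat m) / (2::complex)"
    by (simp add: field_simps)
  show ?thesis
    unfolding Let_def
  proof (intro conjI allI impI)
    show "omega sc (m + n) E 0 = of_nat (m + n)"
      using assms(5) by (rule omega_0)
    show "omega sc (m + n) E 1 = - of_int \<delta> * of_nat m + (of_nat (m + n))\<^sup>2 / 2"
      using assms(5) identity_scalar by (rule omega_1)
    fix k :: nat assume "2 \<le> k"
    then obtain k' where k: "k = Suc (Suc k')" by (metis add_2_eq_Suc le_Suc_ex)
    show "omega sc (m + n) E k
        = (- of_int \<delta> + of_nat (m + n) / 2 + (of_nat n - of_nat m) / 2) * omega sc (m + n) E (k - 1)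
          - (- of_int \<delta> + of_nat (m + n) / 2) * ((of_nat n - of_nat m) / 2) * omega sc (m + n) E (k - 2)"
      using omega_Suc_Suc[OF assms(5) identity_scalar Omega_quad_roots, of k'] unfolding k roots by simp
  qed
qed

end
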